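(* Let $n$ be an even positive integer and let $\mathbb{F}$ be a field with $\operatorname{char}(\mathbb{F})\neq 2$ and $|\mathbb{F}|\geq n^2+1$. Let $Q_n$ denote the set of all $n\times n$ skew-symmetric matrices over $\mathbb{F}$. If $a,b\in Q_n$ satisfy $\det(a+x)=\det(b+x)$ for all $x\in Q_n$, then $a=b$.
   Context: A matrix $x$ is skew-symmetric if $x^t=-x$. *)

theory Defs
  imports "HOL-Analysis.Analysis"
begin

definition skew_symmetric :: "'a::ring_1 ^'n^'n \<Rightarrow> bool" where
  "skew_symmetric x \<longleftrightarrow> transpose x = - x"

end

theory Submission
  imports Defs "HOL-Computational_Algebra.Polynomial"
begin

(* With c = a - b the hypothesis says det (c + y) = det y for every skew-symmetric y.
   For an invertible skew-symmetric w and t \<noteq> 0 rescaling gives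
   det (w + t c) = t^n det (c + w/t) = det w, so the polynomial t \<mapsto> det (w + t c), of
   degree at most n, is constant because the field has more than n elements; its linear
   coefficient det w * trace (c w^-1) must vanish.  As n is even, the indices split into
   pairs, one of them {i, j}, and the block-diagonal matrices with 2x2 blocks
   [[0, x], [-x, 0]] on {i, j} and [[0, 1], [-1, 0]] elsewhere are inverses of invertible
   skew-symmetric matrices.  Comparing x = 2 with x = 1 leaves c_ji - c_ij = 0, hence
   c_ij = 0 since the characteristic is not 2. *)

lemma skew_symmetric_iff: "skew_symmetric (x::'a::ring_1^'n^'n) \<longleftrightarrow> (\<forall>i j. x$j$i = - x$i$j)"
  unfolding skew_symmetric_def transpose_def vec_eq_iff by auto

lemma skew_symmetricI: "(\<And>i j. x$j$i = - x$i$j) \<Longrightarrow> skew_symmetric (x::'a::ring_1^'n^'n)"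
  unfolding skew_symmetric_iff by blast

lemma skew_symmetric_nth: "skew_symmetric (x::'a::ring_1^'n^'n) \<Longrightarrow> x$j$i = - x$i$j"
  unfolding skew_symmetric_iff by blast

lemma skew_symmetric_diff:
  assumes "skew_symmetric x" and "skew_symmetric (y :: 'a::ring_1^'n^'n)"
  shows "skew_symmetric (x - y)"
proof (rule skew_symmetricI)
  fix i j
  show "(x - y)$j$i = - (x - y)$i$j"
    using skew_symmetric_nth[OF assms(1), of j i] skew_symmetric_nth[OF assms(2), of j i] by simp
qed

lemma mat_mult_nth [simp]: "(mat t ** A)$i$j = t * (A::'a::semiring_1^'n^'m)$i$j"
  unfolding matrix_matrix_mult_def mat_def by (simp add: if_distrib[of "\<lambda>c. c * _"] cong: if_cong)

lemma skew_symmetric_mat_mult: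
  assumes "skew_symmetric (x :: 'a::ring_1^'n^'n)"
  shows "skew_symmetric (mat t ** x)"
proof (rule skew_symmetricI)
  fix i j
  show "(mat t ** x)$j$i = - (mat t ** x)$i$j"
    using skew_symmetric_nth[OF assms, of j i] by simp
qed

lemma skew_symmetric_diagonal_eq_0:
  fixes x :: "'a::ring_1_no_zero_divisors^'n^'n"
  assumes "skew_symmetric x" and "(2::'a) \<noteq> 0"
  shows "x$i$i = 0"
proof -
  have "x$i$i + x$i$i = 0"
    using skew_symmetric_nth[OF assms(1), of i i] by (simp add: eq_neg_iff_add_eq_0)
  then have "2 * x$i$i = 0"
    by (simp only: mult_2)
  then show ?thesis
    using assms(2) by simp
qed

definition det_pencil :: "'a::comm_ring_1^'n^'n \<Rightarrow> 'a^'n^'n \<Rightarrow> 'a poly" where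
  "det_pencil A B =
     (\<Sum>p | p permutes (UNIV::'n set). of_int (sign p) * (\<Prod>i\<in>UNIV. [:A$i$p i, B$i$p i:]))"

lemma poly_det_pencil: "poly (det_pencil A B) t = det (A + mat t ** B)"
  unfolding det_pencil_def det_def by (simp add: poly_sum poly_prod)

lemma degree_det_pencil: "degree (det_pencil (A::'a::comm_ring_1^'n^'n) B) \<le> CARD('n)"
  unfolding det_pencil_def
proof (rule degree_sum_le)
  fix p :: "'n \<Rightarrow> 'n"
  have "degree (\<Prod>i\<in>UNIV. [:A$i$p i, B$i$p i:]) \<le> (\<Sum>i\<in>(UNIV::'n set). 1)"
    by (rule order.trans[OF degree_prod_sum_le sum_mono]) auto
  then show "degree (of_int (sign p) * (\<Prod>i\<in>UNIV. [:A$i$p i, B$i$p i:])) \<le> CARD('n)"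
    by (simp add: of_int_poly order.trans[OF degree_smult_le])
qed simp

lemma coeff_1_prod_linear:
  fixes a b :: "'i \<Rightarrow> 'a::comm_ring_1"
  assumes "finite S"
  shows "coeff (\<Prod>i\<in>S. [:a i, b i:]) 1 = (\<Sum>k\<in>S. b k * (\<Prod>i\<in>S - {k}. a i))"
  using assms
proof (induction S rule: finite_induct)
  case empty
  then show ?case by simp
next
  case (insert x F)
  let ?P = "\<Prod>i\<in>F. [:a i, b i:]"
  have coeff_0: "coeff ?P 0 = (\<Prod>i\<in>F. a i)"
    by (simp add: poly_0_coeff_0[symmetric] poly_prod)
  have remove: "a x * (\<Prod>i\<in>F - {k}. a i) = (\<Prod>i\<in>insert x F - {k}. a i)" if "k \<in> F" for k
    using that insert.hyps by (auto simp: insert_Diff_if)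
  have "coeff ([:a x, b x:] * ?P) 1 = a x * coeff ?P 1 + b x * coeff ?P 0"
    by (simp add: coeff_mult atMost_Suc)
  also have "\<dots> = (\<Sum>k\<in>F. b k * (a x * (\<Prod>i\<in>F - {k}. a i))) + b x * (\<Prod>i\<in>F. a i)"
    unfolding insert.IH coeff_0 by (simp add: sum_distrib_left algebra_simps)
  also have "\<dots> = (\<Sum>k\<in>insert x F. b k * (\<Prod>i\<in>insert x F - {k}. a i))"
    using insert.hyps by (simp add: remove add.commute)
  finally show ?case
    using insert.hyps by simp
qed

lemma coeff_1_det_pencil:
  "coeff (det_pencil (A::'a::comm_ring_1^'n^'n) B) 1 =
     (\<Sum>k\<in>UNIV. det (\<chi> i. if i = k then B$k else A$i))"
proof -
  have row: "(\<Prod>i\<in>UNIV. (\<chi> i. if i = k then B$k else A$i)$i$p i) =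
      B$k$p k * (\<Prod>i\<in>UNIV - {k}. A$i$p i)" for k and p :: "'n \<Rightarrow> 'n"
    by (simp add: prod.remove[of UNIV k])
  have "coeff (det_pencil A B) 1 = (\<Sum>p | p permutes (UNIV::'n set).
      of_int (sign p) * (\<Sum>k\<in>UNIV. B$k$p k * (\<Prod>i\<in>UNIV - {k}. A$i$p i)))"
    unfolding det_pencil_def by (simp add: coeff_sum coeff_1_prod_linear[simplified] of_int_poly)
  also have "\<dots> = (\<Sum>k\<in>UNIV. \<Sum>p | p permutes (UNIV::'n set).
      of_int (sign p) * (B$k$p k * (\<Prod>i\<in>UNIV - {k}. A$i$p i)))"
    by (simp add: sum_distrib_left sum.swap[where A = "{p. p permutes (UNIV::'n set)}"])
  also have "\<dots> = (\<Sum>k\<in>UNIV. det (\<chi> i. if i = k then B$k else A$i))"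
    unfolding det_def row ..
  finally show ?thesis .
qed

lemma det_replace_row:
  fixes v w :: "'a::field^'n^'n"
  assumes "v ** w = mat 1"
  shows "det (\<chi> i. if i = k then r else w$i) = (r v* v)$k * det w"
proof -
  have "(\<Sum>m\<in>UNIV. (r v* v)$m *s row m w)$j = r$j" for j
  proof -
    have "(\<Sum>m\<in>UNIV. (r v* v)$m *s row m w)$j = (\<Sum>m\<in>UNIV. \<Sum>l\<in>UNIV. r$l * v$l$m * w$m$j)"
      by (simp add: vector_matrix_mult_def row_def sum_distrib_right)
    also have "\<dots> = (\<Sum>l\<in>UNIV. r$l * (v ** w)$l$j)"
      by (subst sum.swap) (simp add: matrix_matrix_mult_def sum_distrib_left mult.assoc)
    also have "\<dots> = r$j"
      by (simp add: assms mat_def if_distrib cong: if_cong)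
    finally show ?thesis .
  qed
  then have "(\<chi> i. if i = k then r else w$i) =
      (\<chi> i. if i = k then (\<Sum>m\<in>UNIV. (r v* v)$m *s row m w) else row i w)"
    by (simp add: vec_eq_iff row_def)
  then show ?thesis
    by (simp add: cramer_lemma_transpose)
qed

lemma sum_det_replace_rows:
  fixes c v w :: "'a::field^'n^'n"
  assumes "v ** w = mat 1"
  shows "(\<Sum>k\<in>UNIV. det (\<chi> i. if i = k then c$k else w$i)) = trace (c ** v) * det w"
  by (simp add: det_replace_row[OF assms] trace_def sum_distrib_right
      vector_matrix_mult_def matrix_matrix_mult_def)

lemma poly_eq_const_if_card_gt_degree:
  fixes p :: "'a::{comm_ring_1, ring_no_zero_divisors} poly"
  assumes "\<And>t. poly p t = d"
    and "infinite (UNIV :: 'a set) \<or> degree p < card (UNIV :: 'a set)"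
  shows "p = [:d:]"
proof -
  obtain A :: "'a set" where "finite A" and "degree p < card A"
  proof (cases "finite (UNIV :: 'a set)")
    case True
    then show ?thesis using that assms(2) by blast
  next
    case False
    then obtain A :: "'a set" where "finite A" "card A = Suc (degree p)"
      using infinite_arbitrarily_large by blast
    then show ?thesis using that by simp
  qed
  then show ?thesis
    by (intro poly_eqI_degree[of A]) (simp_all add: assms(1))
qed

lemma det_mat_mult: "det (mat t ** A) = t ^ CARD('n) * det (A::'a::comm_ring_1^'n^'n)"
  by (simp add: det_mul det_diagonal mat_def)

lemma det_add_mat_mult_eq_det:
  fixes c w :: "'a::field^'n^'n"
  assumes shift: "\<And>y. skew_symmetric y \<Longrightarrow> det (c + y) = det y"
    and "skew_symmetric w"
  shows "det (w + mat t ** c) = det w"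
proof (cases "t = 0")
  case True
  then have "w + mat t ** c = w"
    by (simp add: vec_eq_iff)
  then show ?thesis
    by simp
next
  case False
  let ?y = "mat (1 / t) ** w"
  have "w + mat t ** c = mat t ** (c + ?y)"
    using False by (simp add: vec_eq_iff algebra_simps)
  then have "det (w + mat t ** c) = t ^ CARD('n) * det ?y"
    by (simp add: det_mat_mult shift skew_symmetric_mat_mult assms(2))
  also have "\<dots> = det w"
    using False by (simp add: det_mat_mult power_one_over)
  finally show ?thesis .
qed

lemma trace_mult_inverse_eq_0:
  fixes c v w :: "'a::field^'n^'n"
  assumes shift: "\<And>y. skew_symmetric y \<Longrightarrow> det (c + y) = det y"
    and card: "infinite (UNIV :: 'a set) \<or> CARD('n) < card (UNIV :: 'a set)"
    and "skew_symmetric w" and inverse: "v ** w = mat 1"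
  shows "trace (c ** v) = 0"
proof -
  have "det_pencil w c = [:det w:]"
  proof (rule poly_eq_const_if_card_gt_degree)
    show "poly (det_pencil w c) t = det w" for t
      unfolding poly_det_pencil by (rule det_add_mat_mult_eq_det[OF shift \<open>skew_symmetric w\<close>])
    show "infinite (UNIV :: 'a set) \<or> degree (det_pencil w c) < card (UNIV :: 'a set)"
      using card degree_det_pencil[of w c] by linarith
  qed
  then have "trace (c ** v) * det w = 0"
    using coeff_1_det_pencil[of w c] sum_det_replace_rows[OF inverse, of c] by simp
  moreover have "det w \<noteq> 0"
    using arg_cong[OF inverse, of det] by (auto simp: det_mul)
  ultimately show ?thesis
    by simp
qed

lemma obtain_signed_pairing:
  fixes i j :: "'n::finite"
  assumes "even CARD('n)" and "i \<noteq> j"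
  obtains \<sigma> :: "'n \<Rightarrow> 'n" and s :: "'n \<Rightarrow> bool"
  where "\<And>k. \<sigma> (\<sigma> k) = k" and "\<sigma> i = j" and "\<And>k. s (\<sigma> k) \<longleftrightarrow> \<not> s k" and "s i"
proof -
  \<comment> \<open>Enumerate the indices as i, j, ...; \<sigma> swaps positions 2m and 2m + 1,
    s marks the even positions.\<close>
  obtain xs where xs: "set xs = UNIV - {i, j}" "distinct xs"
    using finite_distinct_list[of "UNIV - {i, j}"] by auto
  define L where "L = i # j # xs"
  define N where "N = length L"
  have L: "distinct L" "set L = UNIV"
    using xs assms(2) by (auto simp: L_def)
  then have "N = CARD('n)"
    unfolding N_def by (metis distinct_card)
  then have "even N"
    using assms(1) by simp
  have bij: "bij_betw ((!) L) {..<N} UNIV"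
    unfolding N_def by (rule bij_betw_nth) (use L in auto)
  define pos where "pos = inv_into {..<N} ((!) L)"
  have pos_nth: "pos (L ! m) = m" if "m < N" for m
    using bij that unfolding pos_def by (simp add: bij_betw_def)
  have nth_pos: "L ! pos k = k" and pos_lt: "pos k < N" for k
    using bij bij_betw_inv_into[OF bij] unfolding pos_def
    by (auto simp: bij_betw_def f_inv_into_f)
  define partner where "partner m = (if even m then Suc m else m - 1)" for m :: nat
  have partner_lt: "partner m < N" if "m < N" for m
    using that \<open>even N\<close> unfolding partner_def by (cases "Suc m = N") auto
  have partner_partner: "partner (partner m) = m" for m
    unfolding partner_def by auto
  define \<sigma> where "\<sigma> k = L ! partner (pos k)" for k
  have pos_\<sigma>: "pos (\<sigma> k) = partner (pos k)" for k
    unfolding \<sigma>_def by (simp add: pos_nth partner_lt pos_lt)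
  have "pos i = 0"
    using pos_nth[of 0] L unfolding N_def by (simp add: L_def)
  show ?thesis
  proof
    show "\<sigma> (\<sigma> k) = k" for k
      unfolding \<sigma>_def[of "\<sigma> k"] pos_\<sigma> partner_partner nth_pos ..
    show "\<sigma> i = j"
      unfolding \<sigma>_def \<open>pos i = 0\<close> by (simp add: partner_def L_def)
    show "even (pos (\<sigma> k)) \<longleftrightarrow> \<not> even (pos k)" for k
      unfolding pos_\<sigma> partner_def by auto
    show "even (pos i)"
      using \<open>pos i = 0\<close> by simp
  qed
qed

definition monomial_matrix :: "('n \<Rightarrow> 'n) \<Rightarrow> ('n \<Rightarrow> 'a::zero) \<Rightarrow> 'a^'n^'n" where
  "monomial_matrix \<sigma> d = (\<chi> k l. if l = \<sigma> k then d k else 0)"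

lemma skew_symmetric_monomial_matrix:
  fixes d :: "'n::finite \<Rightarrow> 'a::ring_1"
  assumes "\<And>k. \<sigma> (\<sigma> k) = k" and "\<And>k. d (\<sigma> k) = - d k"
  shows "skew_symmetric (monomial_matrix \<sigma> d)"
proof (rule skew_symmetricI)
  fix k l
  have "l = \<sigma> k \<longleftrightarrow> k = \<sigma> l"
    using assms(1) by metis
  then show "monomial_matrix \<sigma> d $ l $ k = - monomial_matrix \<sigma> d $ k $ l"
    unfolding monomial_matrix_def by (auto simp: assms(2))
qed

lemma monomial_matrix_mult_nth:
  "(monomial_matrix \<sigma> d ** B)$k$l = d k * (B::'a::semiring_1^'n^'n)$(\<sigma> k)$l"
  unfolding monomial_matrix_def matrix_matrix_mult_def
  by (simp add: if_distrib[of "\<lambda>c. c * _"] cong: if_cong)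

lemma monomial_matrix_mult_inverse:
  fixes d :: "'n::finite \<Rightarrow> 'a::field"
  assumes "\<And>k. \<sigma> (\<sigma> k) = k" and "\<And>k. d k \<noteq> 0"
  shows "monomial_matrix \<sigma> d ** monomial_matrix \<sigma> (\<lambda>k. inverse (d (\<sigma> k))) = mat 1"
  by (simp add: vec_eq_iff monomial_matrix_mult_nth) (simp add: monomial_matrix_def mat_def assms)

lemma trace_mult_monomial_matrix:
  "trace (c ** monomial_matrix \<sigma> d) = (\<Sum>l\<in>UNIV. c$(\<sigma> l)$l * (d l :: 'a::comm_semiring_1))"
  unfolding trace_def matrix_matrix_mult_def monomial_matrix_def
  by (simp add: sum.swap[of _ UNIV] if_distrib cong: if_cong)

lemma trace_mult_skew_monomial_matrix_eq_0:
  fixes c :: "'a::field^'n^'n" and d :: "'n \<Rightarrow> 'a"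
  assumes shift: "\<And>y. skew_symmetric y \<Longrightarrow> det (c + y) = det y"
    and card: "infinite (UNIV :: 'a set) \<or> CARD('n) < card (UNIV :: 'a set)"
    and "\<And>k. \<sigma> (\<sigma> k) = k" and "\<And>k. d (\<sigma> k) = - d k" and "\<And>k. d k \<noteq> 0"
  shows "trace (c ** monomial_matrix \<sigma> d) = 0"
proof -
  have skew: "skew_symmetric (monomial_matrix \<sigma> (\<lambda>k. inverse (d (\<sigma> k))))"
    by (intro skew_symmetric_monomial_matrix) (simp_all add: assms(3-5) inverse_minus_eq)
  have inverse: "monomial_matrix \<sigma> d ** monomial_matrix \<sigma> (\<lambda>k. inverse (d (\<sigma> k))) = mat 1"
    by (intro monomial_matrix_mult_inverse) (simp_all add: assms(3,5))
  show ?thesis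
    using trace_mult_inverse_eq_0[OF _ card skew inverse] shift by blast
qed

lemma skew_symmetric_nth_eq_0_if_det_shift_invariant:
  fixes c :: "'a::field^'n::finite^'n"
  assumes "even CARD('n)" and "(2::'a) \<noteq> 0"
    and card: "infinite (UNIV :: 'a set) \<or> CARD('n) < card (UNIV :: 'a set)"
    and "skew_symmetric c"
    and shift: "\<And>y. skew_symmetric y \<Longrightarrow> det (c + y) = det y"
    and "i \<noteq> j"
  shows "c$i$j = 0"
proof -
  obtain \<sigma> s where \<sigma>: "\<And>k. \<sigma> (\<sigma> k) = k" "\<sigma> i = j"
    and s: "\<And>k. s (\<sigma> k) \<longleftrightarrow> \<not> s k" "s i"
    using obtain_signed_pairing[OF assms(1,6)] by blast
  have "\<sigma> j = i"
    using \<sigma> by metis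
  then have pair_closed: "\<sigma> k = i \<or> \<sigma> k = j \<longleftrightarrow> k = i \<or> k = j" for k
    using \<sigma> by metis
  have "\<not> s j"
    using s \<open>\<sigma> i = j\<close> by metis
  define d where "d x k = (if s k then 1 else - 1) * (if k = i \<or> k = j then x else 1)"
    for x :: 'a and k
  have trace_eq_0: "(\<Sum>l\<in>UNIV. c$(\<sigma> l)$l * d x l) = 0" if "x \<noteq> 0" for x
  proof -
    have "d x (\<sigma> k) = - d x k" for k
      unfolding d_def using s(1)[of k] pair_closed[of k] by simp
    then have "trace (c ** monomial_matrix \<sigma> (d x)) = 0"
      using trace_mult_skew_monomial_matrix_eq_0[OF _ card \<sigma>(1)] shift that
      by (simp add: d_def)
    then show ?thesis
      by (simp add: trace_mult_monomial_matrix)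
  qed
  have "c$(\<sigma> l)$l * d 2 l - c$(\<sigma> l)$l * d 1 l =
      (if l = i then c$j$i else 0) + (if l = j then - c$i$j else 0)" for l
    using s(2) \<open>\<not> s j\<close> \<sigma>(2) \<open>\<sigma> j = i\<close> assms(6) unfolding d_def by auto
  then have "(\<Sum>l\<in>UNIV. c$(\<sigma> l)$l * d 2 l) - (\<Sum>l\<in>UNIV. c$(\<sigma> l)$l * d 1 l) =
      c$j$i - c$i$j"
    by (simp only: sum_subtractf[symmetric]) (simp add: sum.distrib)
  then have "c$j$i - c$i$j = 0"
    using trace_eq_0[of 2] trace_eq_0[of 1] assms(2) by simp
  then show ?thesis
    using skew_symmetric_nth[OF assms(4), of j i] assms(2) by simp
qed

lemma skew_symmetric_eq_0_if_det_shift_invariant: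
  fixes c :: "'a::field^'n::finite^'n"
  assumes "even CARD('n)" and "(2::'a) \<noteq> 0"
    and "infinite (UNIV :: 'a set) \<or> CARD('n) < card (UNIV :: 'a set)"
    and "skew_symmetric c"
    and "\<And>y. skew_symmetric y \<Longrightarrow> det (c + y) = det y"
  shows "c = 0"
proof -
  have "c$i$j = 0" for i j
    using skew_symmetric_diagonal_eq_0[OF assms(4,2)]
      skew_symmetric_nth_eq_0_if_det_shift_invariant[OF assms] by (cases "i = j") auto
  then show ?thesis
    by (simp add: vec_eq_iff)
qed

theorem lemma2p4:
  fixes a b :: "'a::field ^'n::finite^'n"
  assumes "even CARD('n)"
    and "(2::'a) \<noteq> 0"
    and "infinite (UNIV :: 'a set) \<or> card (UNIV :: 'a set) \<ge> CARD('n)^2 + 1"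
    and "skew_symmetric a" and "skew_symmetric b"
    and "\<forall>x. skew_symmetric x \<longrightarrow> det (a + x) = det (b + x)"
  shows "a = b"
proof -
  have "CARD('n) < CARD('n)^2 + 1"
    by (simp add: power2_eq_square less_Suc_eq_le)
  then have card: "infinite (UNIV :: 'a set) \<or> CARD('n) < card (UNIV :: 'a set)"
    using assms(3) by linarith
  have shift: "det ((a - b) + y) = det y" if "skew_symmetric y" for y
  proof -
    have "det (a + (y - b)) = det (b + (y - b))"
      using assms(6) skew_symmetric_diff[OF that assms(5)] by blast
    then show ?thesis
      by (simp add: algebra_simps)
  qed
  have "a - b = 0"
    using skew_symmetric_eq_0_if_det_shift_invariant[OF assms(1,2) card
        skew_symmetric_diff[OF assms(4,5)] shift] .
  then show ?thesis
    by simp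
qed

end
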